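(* Let $(X,\kappa)$ be a finite digital image and $f:X\to X$ a continuous self-map with $L(f)\neq 0$. Then either $f$ has a fixed point, or $f$ has at least two approximate fixed points.
   Context: A digital image is a pair $(X,\kappa)$ where $X$ is a set and $\kappa$ is a symmetric irreflexive relation on $X$ (the adjacency). Write $x\leftrightarrow y$ if adjacent, $x\Leftrightarrow y$ if adjacent or equal. A map $f$ is continuous if $x\leftrightarrow y$ implies $f(x)\Leftrightarrow f(y)$. A point $x$ is an approximate fixed point of $f:X\to X$ if $f(x)\Leftrightarrow x$. Simplicial homology: a $q$-simplex of $X$ is a set of $q+1$ pairwise adjacent points. $C_q(X)$ is the free abelian group generated by ordered $q$-simplices $\langle x_0,\dots,x_q\rangle$ modulo $\langle x_{\rho(0)},\dots,x_{\rho(q)}\rangle=\operatorname{sgn}(\rho)\langle x_0,\dots,x_q\rangle$, with boundary $\partial\langle x_0,\dots,x_q\rangle=\sum_{i=0}^q(-1)^i\langle x_0,\dots,\widehat{x_i},\dots,x_q\rangle$; $H_q(X)$ is its homology. For continuous $f$, $f_q\langle p_0,\dots,p_q\rangle=\langle f(p_0),\dots,f(p_q)\rangle$ (interpreted as $0$ if the image has fewer than $q+1$ points); this is a chain map inducing $f_{*,q}$ on $H_q$. The simplicial Lefschetz number of a self-map $f$ of a finite image is $L(f)=\sum_{q\ge0}(-1)^q\operatorname{tr}(f_{*,q})$, traces taken on $H_q(X)\otimes\mathbb Q$. *)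

theory Defs
  imports Complex_Main
begin

text \<open>A linear order on the carrier type is used only to fix the orientation of
  simplices (a basis of the oriented chain groups); the Lefschetz number does
  not depend on this choice.\<close>

definition adj_eq :: "('a \<Rightarrow> 'a \<Rightarrow> bool) \<Rightarrow> 'a \<Rightarrow> 'a \<Rightarrow> bool" where
  "adj_eq adj x y \<longleftrightarrow> x = y \<or> adj x y"

definition digital_image :: "'a set \<Rightarrow> ('a \<Rightarrow> 'a \<Rightarrow> bool) \<Rightarrow> bool" where
  "digital_image X adj \<longleftrightarrow> (\<forall>x y. adj x y \<longrightarrow> adj y x) \<and> (\<forall>x. \<not> adj x x)"

definition digitally_continuous ::
  "'a set \<Rightarrow> ('a \<Rightarrow> 'a \<Rightarrow> bool) \<Rightarrow> ('a \<Rightarrow> 'a) \<Rightarrow> bool" where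
  "digitally_continuous X adj f \<longleftrightarrow>
     f ` X \<subseteq> X \<and> (\<forall>x\<in>X. \<forall>y\<in>X. adj x y \<longrightarrow> adj_eq adj (f x) (f y))"

definition approx_fixed_point :: "('a \<Rightarrow> 'a \<Rightarrow> bool) \<Rightarrow> ('a \<Rightarrow> 'a) \<Rightarrow> 'a \<Rightarrow> bool" where
  "approx_fixed_point adj f x \<longleftrightarrow> adj_eq adj (f x) x"

definition simplices :: "'a set \<Rightarrow> ('a \<Rightarrow> 'a \<Rightarrow> bool) \<Rightarrow> nat \<Rightarrow> 'a set set" where
  "simplices X adj q = {s. s \<subseteq> X \<and> finite s \<and> card s = Suc q \<and>
                          (\<forall>x\<in>s. \<forall>y\<in>s. x \<noteq> y \<longrightarrow> adj x y)}"

text \<open>Rational chains C_q(X) tensor Q, in the basis of simplices oriented by the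
  increasing order of their vertices: a chain is a coefficient function on
  sets supported on q-simplices.\<close>
definition chains :: "'a set \<Rightarrow> ('a \<Rightarrow> 'a \<Rightarrow> bool) \<Rightarrow> nat \<Rightarrow> ('a set \<Rightarrow> rat) set" where
  "chains X adj q = {c. \<forall>s. c s \<noteq> 0 \<longrightarrow> s \<in> simplices X adj q}"

text \<open>Number of inversions of a list; an ordered simplex l equals
  (-1)^inversions l times the basis element of set l.\<close>
definition inversions :: "'a::linorder list \<Rightarrow> nat" where
  "inversions l = card {(i, j). i < j \<and> j < length l \<and> l ! j < l ! i}"

definition bdry :: "'a::linorder set \<Rightarrow> ('a \<Rightarrow> 'a \<Rightarrow> bool) \<Rightarrow> nat \<Rightarrow> ('a set \<Rightarrow> rat) \<Rightarrow> ('a set \<Rightarrow> rat)" where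
  "bdry X adj q c = (\<lambda>t. if q = 0 then 0 else
      (\<Sum>s\<in>simplices X adj q. \<Sum>i<Suc q.
          if s - {sorted_list_of_set s ! i} = t then (-1) ^ i * c s else 0))"

text \<open>Induced chain map f_q: the basis simplex s goes to the ordered simplex
  <f x_0,...,f x_q>, i.e. (-1)^inversions times the basis element of f ` s,
  or 0 if the image has fewer than q+1 points.\<close>
definition chain_map :: "'a::linorder set \<Rightarrow> ('a \<Rightarrow> 'a \<Rightarrow> bool) \<Rightarrow> ('a \<Rightarrow> 'a) \<Rightarrow> nat \<Rightarrow>
     ('a set \<Rightarrow> rat) \<Rightarrow> ('a set \<Rightarrow> rat)" where
  "chain_map X adj f q c = (\<lambda>t.
      \<Sum>s\<in>simplices X adj q.
          if f ` s = t \<and> card (f ` s) = Suc q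
          then (-1) ^ inversions (map f (sorted_list_of_set s)) * c s else 0)"

definition cycles :: "'a::linorder set \<Rightarrow> ('a \<Rightarrow> 'a \<Rightarrow> bool) \<Rightarrow> nat \<Rightarrow> ('a set \<Rightarrow> rat) set" where
  "cycles X adj q = {c \<in> chains X adj q. bdry X adj q c = (\<lambda>_. 0)}"

definition boundaries :: "'a::linorder set \<Rightarrow> ('a \<Rightarrow> 'a \<Rightarrow> bool) \<Rightarrow> nat \<Rightarrow> ('a set \<Rightarrow> rat) set" where
  "boundaries X adj q = bdry X adj (Suc q) ` chains X adj (Suc q)"

text \<open>Trace of the map induced by g on the quotient Z/B (a Q-vector space of
  functions 'b => rat): choose z_0,...,z_{k-1} in Z whose classes form a basis of
  Z/B, write g z_i = sum_j a_ij z_j mod B, and take sum_i a_ii.\<close>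
definition quot_trace :: "('b \<Rightarrow> rat) set \<Rightarrow> ('b \<Rightarrow> rat) set \<Rightarrow> (('b \<Rightarrow> rat) \<Rightarrow> ('b \<Rightarrow> rat)) \<Rightarrow> rat" where
  "quot_trace Z B g = (SOME t. \<exists>k (z :: nat \<Rightarrow> 'b \<Rightarrow> rat) (a :: nat \<Rightarrow> nat \<Rightarrow> rat).
      (\<forall>i<k. z i \<in> Z) \<and>
      (\<forall>c. (\<lambda>x. \<Sum>i<k. c i * z i x) \<in> B \<longrightarrow> (\<forall>i<k. c i = 0)) \<and>
      (\<forall>w\<in>Z. \<exists>c. (\<lambda>x. w x - (\<Sum>i<k. c i * z i x)) \<in> B) \<and>
      (\<forall>i<k. (\<lambda>x. g (z i) x - (\<Sum>j<k. a i j * z j x)) \<in> B) \<and>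
      t = (\<Sum>i<k. a i i))"

text \<open>Simplicial Lefschetz number; H_q vanishes for q \<ge> card X.\<close>
definition lefschetz :: "'a::linorder set \<Rightarrow> ('a \<Rightarrow> 'a \<Rightarrow> bool) \<Rightarrow> ('a \<Rightarrow> 'a) \<Rightarrow> rat" where
  "lefschetz X adj f = (\<Sum>q\<le>card X. (-1) ^ q *
      quot_trace (cycles X adj q) (boundaries X adj q) (chain_map X adj f q))"

end

theory Submission
  imports Defs "HOL-Library.Function_Algebras"
begin

text \<open>By the Hopf trace formula, \<open>L(f)\<close> is the alternating sum of the traces of the chain maps
  \<open>f\<^sub>q\<close> on \<open>C\<^sub>q(X) \<otimes> \<rat>\<close>. In the basis of simplices the diagonal entry of \<open>f\<^sub>q\<close> at \<open>s\<close> vanishes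
  unless \<open>f ` s = s\<close>, so \<open>L(f) \<noteq> 0\<close> yields an \<open>f\<close>-invariant simplex \<open>s\<close>. A one-point \<open>s\<close> is a fixed
  point. Otherwise \<open>f\<close> sends every vertex of \<open>s\<close> to a vertex of \<open>s\<close>, hence to itself or a neighbour,
  and the at least two vertices of \<open>s\<close> are approximate fixed points.\<close>

section \<open>Ordered simplices\<close>

definition delete_nth :: "nat \<Rightarrow> 'a list \<Rightarrow> 'a list" where
  "delete_nth i l = take i l @ drop (Suc i) l"

definition swap_adjacent :: "nat \<Rightarrow> 'a list \<Rightarrow> 'a list" where
  "swap_adjacent j l = l[j := l ! Suc j, Suc j := l ! j]"

lemma length_delete_nth [simp]: "i < length l \<Longrightarrow> length (delete_nth i l) = length l - 1"
  by (simp add: delete_nth_def)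

lemma nth_delete_nth:
  "i < length l \<Longrightarrow> m < length l - 1 \<Longrightarrow> delete_nth i l ! m = (if m < i then l ! m else l ! Suc m)"
  by (auto simp: delete_nth_def nth_append min_def)

lemma delete_nth_map: "delete_nth i (map f l) = map f (delete_nth i l)"
  by (simp add: delete_nth_def take_map drop_map)

lemma delete_nth_delete_nth:
  "i \<le> k \<Longrightarrow> Suc k < length l \<Longrightarrow> delete_nth k (delete_nth i l) = delete_nth i (delete_nth (Suc k) l)"
  by (rule nth_equalityI) (auto simp: nth_delete_nth)

lemma
  assumes "distinct l" and "i < length l"
  shows distinct_delete_nth: "distinct (delete_nth i l)"
    and set_delete_nth: "set (delete_nth i l) = set l - {l ! i}"
proof -
  from assms have split: "distinct (take i l @ l ! i # drop (Suc i) l)"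
    by (simp add: id_take_nth_drop[symmetric])
  then show "distinct (delete_nth i l)"
    by (simp add: delete_nth_def)
  have "set l - {l ! i} = set (take i l @ l ! i # drop (Suc i) l) - {l ! i}"
    using assms(2) by (simp add: id_take_nth_drop[symmetric])
  also have "\<dots> = set (delete_nth i l)"
    using split by (auto simp: delete_nth_def)
  finally show "set (delete_nth i l) = set l - {l ! i}" ..
qed

lemma sorted_delete_nth: "sorted l \<Longrightarrow> i < length l \<Longrightarrow> sorted (delete_nth i l)"
  by (auto simp: sorted_iff_nth_mono nth_delete_nth)

lemma length_swap_adjacent [simp]: "length (swap_adjacent j l) = length l"
  by (simp add: swap_adjacent_def)

lemma nth_swap_adjacent:
  "Suc j < length l \<Longrightarrow> m < length l \<Longrightarrow>
   swap_adjacent j l ! m = (if m = j then l ! Suc j else if m = Suc j then l ! j else l ! m)"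
  by (auto simp: swap_adjacent_def nth_list_update)

lemma set_swap_adjacent: "Suc j < length l \<Longrightarrow> set (swap_adjacent j l) = set l"
  by (simp add: swap_adjacent_def)

lemma distinct_swap_adjacent: "Suc j < length l \<Longrightarrow> distinct (swap_adjacent j l) = distinct l"
  by (simp add: swap_adjacent_def)

lemma swap_adjacent_swap_adjacent: "Suc j < length l \<Longrightarrow> swap_adjacent j (swap_adjacent j l) = l"
  by (rule nth_equalityI) (auto simp: nth_swap_adjacent)

lemma delete_nth_swap_adjacent_less:
  "i < j \<Longrightarrow> Suc j < length l \<Longrightarrow>
   delete_nth i (swap_adjacent j l) = swap_adjacent (j - 1) (delete_nth i l)"
  by (rule nth_equalityI) (auto simp: nth_delete_nth nth_swap_adjacent)

lemma delete_nth_swap_adjacent_greater: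
  "Suc j < i \<Longrightarrow> i < length l \<Longrightarrow> delete_nth i (swap_adjacent j l) = swap_adjacent j (delete_nth i l)"
  by (rule nth_equalityI) (auto simp: nth_delete_nth nth_swap_adjacent)

lemma delete_nth_swap_adjacent_self:
  "Suc j < length l \<Longrightarrow> delete_nth j (swap_adjacent j l) = delete_nth (Suc j) l"
  by (rule nth_equalityI) (auto simp: nth_delete_nth nth_swap_adjacent less_Suc_eq)

lemma delete_nth_swap_adjacent_Suc:
  "Suc j < length l \<Longrightarrow> delete_nth (Suc j) (swap_adjacent j l) = delete_nth j l"
  by (rule nth_equalityI) (auto simp: nth_delete_nth nth_swap_adjacent less_Suc_eq)

text \<open>Transposing the positions \<open>j\<close> and \<open>Suc j\<close> maps the inversions of the swapped list
  bijectively onto those of \<open>l\<close> other than \<open>(j, Suc j)\<close>.\<close>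
lemma inversions_swap_adjacent:
  assumes j: "Suc j < length l" and desc: "l ! Suc j < l ! j"
  shows "inversions l = Suc (inversions (swap_adjacent j l))"
proof -
  define \<sigma> where "\<sigma> i = (if i = j then Suc j else if i = Suc j then j else i)" for i
  let ?I = "\<lambda>l :: 'a list. {(i, k). i < k \<and> k < length l \<and> l ! k < l ! i}"
  have \<sigma>_\<sigma> [simp]: "\<sigma> (\<sigma> i) = i" for i
    by (simp add: \<sigma>_def)
  have inj_\<sigma>\<sigma>: "inj (map_prod \<sigma> \<sigma>)"
    by (rule prod.inj_map; metis \<sigma>_\<sigma> injI)
  have \<sigma>_less [simp]: "\<sigma> i < length l \<longleftrightarrow> i < length l" for i
    using j by (auto simp: \<sigma>_def)
  have nth: "swap_adjacent j l ! i = l ! \<sigma> i" if "i < length l" for i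
    using j that by (auto simp: nth_swap_adjacent \<sigma>_def)
  have order: "\<sigma> i < \<sigma> k \<longleftrightarrow> i < k" if "(i, k) \<noteq> (j, Suc j)" "(i, k) \<noteq> (Suc j, j)" for i k
    using that by (auto simp: \<sigma>_def)
  have image_eq: "map_prod \<sigma> \<sigma> ` ?I (swap_adjacent j l) = ?I l - {(j, Suc j)}"
  proof (rule set_eqI)
    fix p :: "nat \<times> nat"
    obtain i k where p: "p = map_prod \<sigma> \<sigma> (i, k)"
      by (metis \<sigma>_\<sigma> map_prod_simp surj_pair)
    have "p \<in> map_prod \<sigma> \<sigma> ` ?I (swap_adjacent j l) \<longleftrightarrow> (i, k) \<in> ?I (swap_adjacent j l)"
      unfolding p by (rule inj_image_mem_iff[OF inj_\<sigma>\<sigma>])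
    also have "\<dots> \<longleftrightarrow> p \<in> ?I l - {(j, Suc j)}"
    proof (cases "(i, k) = (j, Suc j) \<or> (i, k) = (Suc j, j)")
      case True
      then show ?thesis
        using j desc by (auto simp: p nth_swap_adjacent \<sigma>_def)
    next
      case False
      then have "(\<sigma> i, \<sigma> k) \<noteq> (j, Suc j)"
        by (auto simp: \<sigma>_def split: if_splits)
      with False show ?thesis
        by (auto simp: p order nth)
    qed
    finally show "p \<in> map_prod \<sigma> \<sigma> ` ?I (swap_adjacent j l) \<longleftrightarrow> p \<in> ?I l - {(j, Suc j)}" .
  qed
  have card_diff: "card (?I l - {(j, Suc j)}) = inversions (swap_adjacent j l)"
    unfolding image_eq[symmetric] inversions_def
    by (rule card_image[OF inj_on_subset[OF inj_\<sigma>\<sigma> subset_UNIV]])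
  have finite: "finite (?I l)"
    by (rule finite_subset[of _ "{..<length l} \<times> {..<length l}"]) auto
  have "(j, Suc j) \<in> ?I l"
    using j desc by simp
  from card_Suc_Diff1[OF finite this] show ?thesis
    unfolding card_diff by (simp add: inversions_def)
qed

definition ordered_simplex :: "'a::linorder list \<Rightarrow> 'a set \<Rightarrow> rat" where
  "ordered_simplex l = (\<lambda>t. if distinct l \<and> set l = t then (-1) ^ inversions l else 0)"

definition ordered_boundary :: "'a::linorder list \<Rightarrow> 'a set \<Rightarrow> rat" where
  "ordered_boundary l = (\<lambda>t. \<Sum>i<length l. (-1) ^ i * ordered_simplex (delete_nth i l) t)"

lemma inversions_sorted: "sorted l \<Longrightarrow> inversions l = 0"
  unfolding inversions_def sorted_iff_nth_mono
  by (metis (no_types, lifting) card.empty case_prodE empty_Collect_eq leD less_imp_le_nat)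

lemma ordered_simplex_sorted:
  "sorted l \<Longrightarrow> distinct l \<Longrightarrow> ordered_simplex l = (\<lambda>t. if set l = t then 1 else 0)"
  by (auto simp: ordered_simplex_def inversions_sorted)

lemma sign_swap_adjacent:
  assumes j: "Suc j < length l" and ne: "l ! j \<noteq> l ! Suc j"
  shows "(-1::rat) ^ inversions (swap_adjacent j l) = - ((-1) ^ inversions l)"
proof (cases "l ! Suc j < l ! j")
  case True
  then show ?thesis
    using inversions_swap_adjacent[OF j] by simp
next
  case False
  then have "swap_adjacent j l ! Suc j < swap_adjacent j l ! j"
    using ne j by (auto simp: nth_swap_adjacent)
  then show ?thesis
    using inversions_swap_adjacent[of j "swap_adjacent j l"] j
    by (simp add: swap_adjacent_swap_adjacent)
qed

lemma ordered_simplex_swap_adjacent: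
  assumes j: "Suc j < length l"
  shows "ordered_simplex (swap_adjacent j l) = (\<lambda>t. - ordered_simplex l t)"
proof (cases "distinct l")
  case True
  then have "l ! j \<noteq> l ! Suc j"
    using j by (simp add: nth_eq_iff_index_eq)
  with True j show ?thesis
    by (auto simp: ordered_simplex_def set_swap_adjacent distinct_swap_adjacent sign_swap_adjacent)
qed (use j in \<open>auto simp: ordered_simplex_def distinct_swap_adjacent\<close>)

lemma ordered_boundary_swap_adjacent:
  assumes j: "Suc j < length l"
  shows "ordered_boundary (swap_adjacent j l) = (\<lambda>t. - ordered_boundary l t)"
proof
  fix t
  define F where "F i = (-1::rat) ^ i * ordered_simplex (delete_nth i l) t" for i
  define \<tau> where "\<tau> i = (if i = j then Suc j else if i = Suc j then j else i)" for i
  have term_swap: "(-1) ^ i * ordered_simplex (delete_nth i (swap_adjacent j l)) t = - F (\<tau> i)"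
    if i: "i < length l" for i
  proof -
    consider "i < j" | "i = j" | "i = Suc j" | "Suc j < i"
      by linarith
    then show ?thesis
    proof cases
      case 1
      then have "Suc (j - 1) < length (delete_nth i l)"
        using j by simp
      with 1 j show ?thesis
        by (simp add: delete_nth_swap_adjacent_less ordered_simplex_swap_adjacent F_def \<tau>_def)
    next
      case 4
      then have "Suc j < length (delete_nth i l)"
        using i by simp
      with 4 i show ?thesis
        by (simp add: delete_nth_swap_adjacent_greater ordered_simplex_swap_adjacent F_def \<tau>_def)
    qed (use j in \<open>simp_all add: delete_nth_swap_adjacent_self delete_nth_swap_adjacent_Suc
        F_def \<tau>_def\<close>)
  qed
  have "ordered_boundary (swap_adjacent j l) t = (\<Sum>i<length l. - F (\<tau> i))"
    unfolding ordered_boundary_def by (simp add: term_swap)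
  also have "\<dots> = - (\<Sum>i<length l. F i)"
    unfolding sum_negf
    by (rule arg_cong[where f = uminus], rule sum.reindex_bij_witness[where i = \<tau> and j = \<tau>])
      (use j in \<open>auto simp: \<tau>_def\<close>)
  finally show "ordered_boundary (swap_adjacent j l) t = - ordered_boundary l t"
    by (simp add: ordered_boundary_def F_def)
qed

text \<open>Bubble sort: induction on the number of inversions, removing one by an adjacent swap.\<close>
lemma ordered_boundary_sort:
  "distinct l \<Longrightarrow>
   ordered_boundary l = (\<lambda>t. (-1) ^ inversions l * ordered_boundary (sorted_list_of_set (set l)) t)"
proof (induction "inversions l" arbitrary: l rule: less_induct)
  case less
  show ?case
  proof (cases "sorted l")
    case True
    then show ?thesis
      using less.prems by (simp add: inversions_sorted sorted_list_of_set_sort_remdups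
          distinct_remdups_id sorted_sort_id)
  next
    case False
    then obtain j where j: "Suc j < length l" "l ! Suc j < l ! j"
      by (auto simp: sorted_iff_nth_Suc not_le)
    have inv: "inversions l = Suc (inversions (swap_adjacent j l))"
      using inversions_swap_adjacent[OF j] .
    have "ordered_boundary l = (\<lambda>t. - ordered_boundary (swap_adjacent j l) t)"
      using ordered_boundary_swap_adjacent[of j "swap_adjacent j l"] j
      by (simp add: swap_adjacent_swap_adjacent)
    with less.hyps[of "swap_adjacent j l"] inv less.prems j show ?thesis
      by (simp add: distinct_swap_adjacent set_swap_adjacent)
  qed
qed

text \<open>Move one copy of a repeated vertex next to the other by adjacent swaps: a list fixed by a
  swap has a boundary equal to its own negative.\<close>
lemma ordered_boundary_not_distinct:
  assumes "\<not> distinct l"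
  shows "ordered_boundary l = (\<lambda>_. 0)"
proof -
  have "ordered_boundary l = (\<lambda>_. 0)" if "a < b" "b < length l" "l ! a = l ! b" for a b l
    using that
  proof (induction "b - a" arbitrary: a l rule: less_induct)
    case less
    show ?case
    proof (cases "b = Suc a")
      case True
      then have "swap_adjacent a l = l"
        using less.prems by (intro nth_equalityI) (auto simp: nth_swap_adjacent)
      then show ?thesis
        using ordered_boundary_swap_adjacent[of a l] less.prems True
        by (simp add: fun_eq_iff equal_neg_zero)
    next
      case False
      then have "ordered_boundary (swap_adjacent a l) = (\<lambda>_. 0)"
        using less.hyps[of "Suc a" "swap_adjacent a l"] less.prems by (simp add: nth_swap_adjacent)
      then show ?thesis
        using ordered_boundary_swap_adjacent[of a l] less.prems by (simp add: fun_eq_iff)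
    qed
  qed
  moreover obtain a b where "a < b" "b < length l" "l ! a = l ! b"
    using assms by (metis distinct_conv_nth linorder_neqE_nat)
  ultimately show ?thesis
    by blast
qed

text \<open>The term deleting positions \<open>i \<le> k\<close> and then \<open>k\<close> cancels the one deleting \<open>Suc k\<close> and
  then \<open>i\<close>.\<close>
lemma ordered_boundary_boundary:
  "(\<lambda>t. \<Sum>i<length l. (-1) ^ i * ordered_boundary (delete_nth i l) t) = (\<lambda>_. 0)"
proof
  fix t
  let ?n = "length l"
  define T where
    "T = (\<lambda>(i, k). (-1::rat) ^ (i + k) * ordered_simplex (delete_nth k (delete_nth i l)) t)"
  define P1 where "P1 = {(i, k). i < ?n \<and> k < ?n - 1 \<and> k < i}"
  define P2 where "P2 = {(i, k). i < ?n \<and> k < ?n - 1 \<and> i \<le> k}"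
  have "(\<Sum>i<?n. (-1) ^ i * ordered_boundary (delete_nth i l) t) = (\<Sum>i<?n. \<Sum>k<?n - 1. T (i, k))"
    by (rule sum.cong) (auto simp: ordered_boundary_def T_def sum_distrib_left power_add mult.assoc)
  also have "\<dots> = (\<Sum>p\<in>P1 \<union> P2. T p)"
    by (simp add: sum.cartesian_product) (rule sum.cong, auto simp: P1_def P2_def)
  also have "\<dots> = (\<Sum>p\<in>P1. T p) + (\<Sum>p\<in>P2. T p)"
    by (rule sum.union_disjoint)
      (auto simp: P1_def P2_def intro: finite_subset[of _ "{..<?n} \<times> {..<?n}"])
  also have "(\<Sum>p\<in>P2. T p) = (\<Sum>p\<in>P1. - T p)"
  proof (rule sum.reindex_bij_witness[where i = "\<lambda>(i, k). (k, i - 1)"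
      and j = "\<lambda>(i, k). (Suc k, i)"])
    fix p assume "p \<in> P2"
    then obtain i k where p: "p = (i, k)" "i < ?n" "k < ?n - 1" "i \<le> k"
      by (auto simp: P2_def)
    then have "delete_nth k (delete_nth i l) = delete_nth i (delete_nth (Suc k) l)"
      by (intro delete_nth_delete_nth) auto
    with p show "- T (case p of (i, k) \<Rightarrow> (Suc k, i)) = T p"
      by (simp add: T_def add.commute)
  qed (auto simp: P1_def P2_def)
  finally show "(\<Sum>i<?n. (-1) ^ i * ordered_boundary (delete_nth i l) t) = 0"
    by (simp add: sum_negf)
qed

section \<open>The simplicial chain complex\<close>

lemma simplicesD:
  "s \<in> simplices X adj q \<Longrightarrow> finite s \<and> card s = Suc q \<and> s \<subseteq> X"
  by (auto simp: simplices_def)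

lemma finite_simplices: "finite X \<Longrightarrow> finite (simplices X adj q)"
  by (rule finite_subset[of _ "Pow X"]) (auto simp: simplices_def)

lemma simplices_face:
  "s \<in> simplices X adj q \<Longrightarrow> t \<subseteq> s \<Longrightarrow> card t = Suc q' \<Longrightarrow> t \<in> simplices X adj q'"
  unfolding simplices_def using finite_subset by blast

lemma simplices_image:
  assumes f: "digitally_continuous X adj f" and s: "s \<in> simplices X adj q"
    and card: "card (f ` s) = Suc q"
  shows "f ` s \<in> simplices X adj q"
proof -
  have "adj (f x) (f y)" if "x \<in> s" "y \<in> s" "f x \<noteq> f y" for x y
  proof -
    have "adj x y" and "x \<in> X" and "y \<in> X"
      using s that by (auto simp: simplices_def)
    then show ?thesis
      using f \<open>f x \<noteq> f y\<close> unfolding digitally_continuous_def adj_eq_def by blast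
  qed
  moreover have "f ` s \<subseteq> X"
    using f simplicesD[OF s] unfolding digitally_continuous_def by blast
  ultimately show ?thesis
    using s card by (auto simp: simplices_def)
qed

lemma simplices_empty: "finite X \<Longrightarrow> card X \<le> q \<Longrightarrow> simplices X adj q = {}"
  by (auto dest!: simplicesD dest: card_mono)

lemma sorted_list_of_set_delete_nth:
  assumes "finite s" and "i < card s"
  shows "delete_nth i (sorted_list_of_set s) \<in> {l. sorted l \<and> distinct l}"
    and "set (delete_nth i (sorted_list_of_set s)) = s - {sorted_list_of_set s ! i}"
  using assms by (simp_all add: sorted_delete_nth distinct_delete_nth set_delete_nth)

lemma bdry_Suc_eq_sum:
  "bdry X adj (Suc p) c =
   (\<lambda>t. \<Sum>s\<in>simplices X adj (Suc p). c s * ordered_boundary (sorted_list_of_set s) t)"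
proof
  fix t
  have "(if s - {sorted_list_of_set s ! i} = t then (-1) ^ i * c s else 0) =
      c s * ((-1) ^ i * ordered_simplex (delete_nth i (sorted_list_of_set s)) t)"
    if "s \<in> simplices X adj (Suc p)" "i < Suc (Suc p)" for s i
    using that sorted_list_of_set_delete_nth[of s i] simplicesD[of s]
    by (simp add: ordered_simplex_sorted)
  then show "bdry X adj (Suc p) c t =
      (\<Sum>s\<in>simplices X adj (Suc p). c s * ordered_boundary (sorted_list_of_set s) t)"
    unfolding bdry_def ordered_boundary_def
    by (auto simp: sum_distrib_left simp del: sum.lessThan_Suc dest!: simplicesD intro!: sum.cong)
qed

lemma chain_map_eq_sum:
  "chain_map X adj f q c =
   (\<lambda>t. \<Sum>s\<in>simplices X adj q. c s * ordered_simplex (map f (sorted_list_of_set s)) t)"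
proof -
  have "distinct (map f (sorted_list_of_set s)) \<longleftrightarrow> card (f ` s) = Suc q"
    if "s \<in> simplices X adj q" for s
    using simplicesD[OF that]
    by (metis card_distinct distinct_card length_map length_sorted_list_of_set set_map
        sorted_list_of_set.set_sorted_key_list_of_set)
  then show ?thesis
    unfolding chain_map_def
    by (auto simp: ordered_simplex_def fun_eq_iff dest: simplicesD intro!: sum.cong)
qed

lemma bdry_sum:
  assumes "finite A"
  shows "bdry X adj q (\<lambda>t. \<Sum>a\<in>A. r a * c a t) = (\<lambda>t. \<Sum>a\<in>A. r a * bdry X adj q (c a) t)"
proof (cases q)
  case 0
  then show ?thesis by (simp add: bdry_def)
next
  case Suc
  then show ?thesis
    by (simp add: bdry_Suc_eq_sum sum_distrib_right sum_distrib_left mult.assoc sum.swap[of _ A])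
qed

lemma chain_map_sum:
  "chain_map X adj f q (\<lambda>t. \<Sum>a\<in>A. r a * c a t) = (\<lambda>t. \<Sum>a\<in>A. r a * chain_map X adj f q (c a) t)"
  unfolding chain_map_eq_sum
  by (simp add: sum_distrib_right sum_distrib_left mult.assoc sum.swap[of _ A])

lemma bdry_ordered_simplex:
  assumes X: "finite X" and len: "length l = Suc (Suc p)"
    and simplex: "distinct l \<Longrightarrow> set l \<in> simplices X adj (Suc p)"
  shows "bdry X adj (Suc p) (ordered_simplex l) = ordered_boundary l"
proof (cases "distinct l")
  case True
  have "bdry X adj (Suc p) (ordered_simplex l) t =
      (\<Sum>s\<in>simplices X adj (Suc p).
         if s = set l then (-1) ^ inversions l * ordered_boundary (sorted_list_of_set s) t else 0)"
    for t by (auto simp: bdry_Suc_eq_sum ordered_simplex_def True intro!: sum.cong)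
  then have "bdry X adj (Suc p) (ordered_simplex l) =
      (\<lambda>t. (-1) ^ inversions l * ordered_boundary (sorted_list_of_set (set l)) t)"
    using simplex[OF True] finite_simplices[OF X] by (simp add: sum.delta' fun_eq_iff)
  then show ?thesis
    using ordered_boundary_sort[OF True] by simp
next
  case False
  then show ?thesis
    by (simp add: bdry_Suc_eq_sum ordered_simplex_def ordered_boundary_not_distinct)
qed

lemma simplices_delete_nth:
  assumes "s \<in> simplices X adj (Suc p)" and "i < Suc (Suc p)"
  shows "set (delete_nth i (sorted_list_of_set s)) \<in> simplices X adj p"
    and "length (delete_nth i (sorted_list_of_set s)) = Suc p"
proof -
  have s: "finite s" "card s = Suc (Suc p)"
    using simplicesD[OF assms(1)] by auto
  then have "sorted_list_of_set s ! i \<in> s"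
    using assms(2) by (metis length_sorted_list_of_set nth_mem set_sorted_list_of_set)
  then have "card (s - {sorted_list_of_set s ! i}) = Suc p"
    using s by simp
  then show "set (delete_nth i (sorted_list_of_set s)) \<in> simplices X adj p"
    using sorted_list_of_set_delete_nth(2)[of s i] assms s
    by (simp add: simplices_face[OF assms(1)])
  show "length (delete_nth i (sorted_list_of_set s)) = Suc p"
    using assms s by simp
qed

lemma bdry_bdry:
  assumes X: "finite X"
  shows "bdry X adj q (bdry X adj (Suc q) c) = (\<lambda>_. 0)"
proof (cases q)
  case 0
  then show ?thesis by (simp add: bdry_def)
next
  case (Suc p)
  have "bdry X adj (Suc p) (ordered_boundary (sorted_list_of_set s)) = (\<lambda>_. 0)"
    if s: "s \<in> simplices X adj (Suc (Suc p))" for s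
  proof -
    let ?l = "sorted_list_of_set s"
    have len: "length ?l = Suc (Suc (Suc p))"
      using simplicesD[OF s] by simp
    have "bdry X adj (Suc p) (ordered_boundary ?l) =
        (\<lambda>t. \<Sum>i<length ?l. (-1) ^ i * ordered_boundary (delete_nth i ?l) t)"
      unfolding ordered_boundary_def[of ?l] bdry_sum[OF finite_lessThan]
      using len simplices_delete_nth[OF s] by (simp add: bdry_ordered_simplex[OF X])
    then show ?thesis
      using ordered_boundary_boundary[of ?l] by simp
  qed
  then show ?thesis
    unfolding Suc bdry_Suc_eq_sum[of X adj "Suc p"] bdry_sum[OF finite_simplices[OF X]] by simp
qed

lemma chain_map_ordered_simplex:
  assumes X: "finite X" and l: "sorted l" "distinct l" "set l \<in> simplices X adj p"
  shows "chain_map X adj f p (ordered_simplex l) = ordered_simplex (map f l)"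
proof -
  have "sorted_list_of_set (set l) = l"
    using l by (simp add: sorted_list_of_set_sort_remdups distinct_remdups_id sorted_sort_id)
  moreover have "chain_map X adj f p (ordered_simplex l) t =
      (\<Sum>s\<in>simplices X adj p.
         if s = set l then ordered_simplex (map f (sorted_list_of_set s)) t else 0)"
    for t unfolding chain_map_eq_sum using l by (auto simp: ordered_simplex_sorted intro!: sum.cong)
  ultimately show ?thesis
    using l finite_simplices[OF X] by (simp add: sum.delta' fun_eq_iff)
qed

lemma bdry_chain_map:
  assumes X: "finite X" and f: "digitally_continuous X adj f"
  shows "bdry X adj (Suc p) (chain_map X adj f (Suc p) c) =
    chain_map X adj f p (bdry X adj (Suc p) c)"
proof -
  have image_boundary: "bdry X adj (Suc p) (ordered_simplex (map f (sorted_list_of_set s))) =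
      chain_map X adj f p (ordered_boundary (sorted_list_of_set s))"
    if s: "s \<in> simplices X adj (Suc p)" for s
  proof -
    let ?l = "sorted_list_of_set s"
    have len: "length ?l = Suc (Suc p)"
      using simplicesD[OF s] by simp
    have "set (map f ?l) \<in> simplices X adj (Suc p)" if "distinct (map f ?l)"
      using simplices_image[OF f s] simplicesD[OF s] distinct_card[OF that] by simp
    then have "bdry X adj (Suc p) (ordered_simplex (map f ?l)) = ordered_boundary (map f ?l)"
      using len by (intro bdry_ordered_simplex[OF X]) simp_all
    also have "\<dots> = chain_map X adj f p (ordered_boundary ?l)"
    proof -
      have "chain_map X adj f p (ordered_simplex (delete_nth i ?l)) =
          ordered_simplex (delete_nth i (map f ?l))"
        if "i < length ?l" for i
        using that len simplices_delete_nth[OF s] sorted_list_of_set_delete_nth(1)[of s i]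
          simplicesD[OF s]
        by (simp add: chain_map_ordered_simplex[OF X] delete_nth_map)
      then show ?thesis
        unfolding ordered_boundary_def chain_map_sum length_map
        by (intro ext sum.cong) simp_all
    qed
    finally show ?thesis .
  qed
  have "bdry X adj (Suc p) (chain_map X adj f (Suc p) c) =
      (\<lambda>t. \<Sum>s\<in>simplices X adj (Suc p).
             c s * bdry X adj (Suc p) (ordered_simplex (map f (sorted_list_of_set s))) t)"
    unfolding chain_map_eq_sum by (rule bdry_sum[OF finite_simplices[OF X]])
  also have "\<dots> = (\<lambda>t. \<Sum>s\<in>simplices X adj (Suc p).
      c s * chain_map X adj f p (ordered_boundary (sorted_list_of_set s)) t)"
    by (intro ext sum.cong) (simp_all add: image_boundary)
  also have "\<dots> = chain_map X adj f p (bdry X adj (Suc p) c)"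
    unfolding bdry_Suc_eq_sum chain_map_sum ..
  finally show ?thesis .
qed

lemma chain_map_chains:
  assumes f: "digitally_continuous X adj f"
  shows "chain_map X adj f q c \<in> chains X adj q"
proof -
  have "t \<in> simplices X adj q" if nonzero: "chain_map X adj f q c t \<noteq> 0" for t
  proof -
    obtain s where s: "s \<in> simplices X adj q" and
      "(if f ` s = t \<and> card (f ` s) = Suc q
        then (-1) ^ inversions (map f (sorted_list_of_set s)) * c s else 0) \<noteq> 0"
      using nonzero unfolding chain_map_def by (rule sum.not_neutral_contains_not_neutral)
    then have "f ` s = t" and "card (f ` s) = Suc q"
      by (simp_all split: if_splits)
    then show ?thesis
      using simplices_image[OF f s] by simp
  qed
  then show ?thesis
    by (auto simp: chains_def)
qed

lemma bdry_chains: "bdry X adj (Suc q) c \<in> chains X adj q"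
proof -
  have "t \<in> simplices X adj q" if nonzero: "bdry X adj (Suc q) c t \<noteq> 0" for t
  proof -
    obtain s where s: "s \<in> simplices X adj (Suc q)" and
      "(\<Sum>i<Suc (Suc q). if s - {sorted_list_of_set s ! i} = t then (-1) ^ i * c s else 0) \<noteq> 0"
      using nonzero unfolding bdry_def
      by (auto simp del: sum.lessThan_Suc elim: sum.not_neutral_contains_not_neutral)
    then obtain i where i: "i < Suc (Suc q)"
      and "(if s - {sorted_list_of_set s ! i} = t then (-1::rat) ^ i * c s else 0) \<noteq> 0"
      by (auto simp del: sum.lessThan_Suc elim: sum.not_neutral_contains_not_neutral)
    then have t: "t = s - {sorted_list_of_set s ! i}"
      by (simp split: if_splits)
    show ?thesis
      using simplices_delete_nth(1)[OF s i] sorted_list_of_set_delete_nth(2)[of s i]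
        simplicesD[OF s] i t
      by simp
  qed
  then show ?thesis
    by (auto simp: chains_def)
qed

section \<open>Traces on quotient spaces\<close>

definition lincomb :: "nat \<Rightarrow> (nat \<Rightarrow> rat) \<Rightarrow> (nat \<Rightarrow> 'b \<Rightarrow> rat) \<Rightarrow> 'b \<Rightarrow> rat" where
  "lincomb k c z = (\<lambda>x. \<Sum>i<k. c i * z i x)"

definition rat_subspace :: "('b \<Rightarrow> rat) set \<Rightarrow> bool" where
  "rat_subspace W \<longleftrightarrow>
     (\<lambda>_. 0) \<in> W \<and> (\<forall>u\<in>W. \<forall>v\<in>W. (\<lambda>x. u x + v x) \<in> W) \<and> (\<forall>c. \<forall>u\<in>W. (\<lambda>x. c * u x) \<in> W)"

definition rat_linear :: "(('b \<Rightarrow> rat) \<Rightarrow> ('c \<Rightarrow> rat)) \<Rightarrow> bool" where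
  "rat_linear g \<longleftrightarrow> (\<forall>(A :: nat set) c u. finite A \<longrightarrow>
     g (\<lambda>x. \<Sum>i\<in>A. c i * u i x) = (\<lambda>x. \<Sum>i\<in>A. c i * g (u i) x))"

definition equiv_mod :: "('b \<Rightarrow> rat) set \<Rightarrow> ('b \<Rightarrow> rat) \<Rightarrow> ('b \<Rightarrow> rat) \<Rightarrow> bool" where
  "equiv_mod W u v \<longleftrightarrow> (\<lambda>x. u x - v x) \<in> W"

definition independent_mod :: "('b \<Rightarrow> rat) set \<Rightarrow> nat \<Rightarrow> (nat \<Rightarrow> 'b \<Rightarrow> rat) \<Rightarrow> bool" where
  "independent_mod B k z \<longleftrightarrow> (\<forall>c. lincomb k c z \<in> B \<longrightarrow> (\<forall>i<k. c i = 0))"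

text \<open>The classes of \<open>z 0, \<dots>, z (k - 1)\<close> form a basis of \<open>Z / B\<close> in which \<open>a\<close> is the matrix
  of \<open>g\<close>, row \<open>i\<close> holding the coordinates of \<open>g (z i)\<close>: the witnesses chosen in \<open>quot_trace\<close>.\<close>
definition quotient_matrix ::
  "('b \<Rightarrow> rat) set \<Rightarrow> ('b \<Rightarrow> rat) set \<Rightarrow> (('b \<Rightarrow> rat) \<Rightarrow> ('b \<Rightarrow> rat)) \<Rightarrow>
   nat \<Rightarrow> (nat \<Rightarrow> 'b \<Rightarrow> rat) \<Rightarrow> (nat \<Rightarrow> nat \<Rightarrow> rat) \<Rightarrow> bool" where
  "quotient_matrix Z B g k z a \<longleftrightarrow>
     (\<forall>i<k. z i \<in> Z) \<and> independent_mod B k z \<and>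
     (\<forall>w\<in>Z. \<exists>c. equiv_mod B w (lincomb k c z)) \<and>
     (\<forall>i<k. equiv_mod B (g (z i)) (lincomb k (a i) z))"

lemma quot_trace_eq_Eps:
  "quot_trace Z B g = (SOME t. \<exists>k z a. quotient_matrix Z B g k z a \<and> t = (\<Sum>i<k. a i i))"
  unfolding quot_trace_def quotient_matrix_def independent_mod_def lincomb_def equiv_mod_def by simp

lemma lincomb_lincomb: "lincomb k c (\<lambda>j. lincomb n (d j) w) = lincomb n (\<lambda>m. \<Sum>j<k. c j * d j m) w"
  unfolding lincomb_def
  by (simp add: sum_distrib_left sum_distrib_right mult.assoc sum.swap[of _ "{..<k}"])

lemma lincomb_diff: "(\<lambda>x. lincomb k c z x - lincomb k d z x) = lincomb k (\<lambda>i. c i - d i) z"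
  by (simp add: lincomb_def sum_subtractf left_diff_distrib)

lemma lincomb_delta: "l < k \<Longrightarrow> lincomb k (\<lambda>j. if j = l then 1 else 0) z = z l"
  by (simp add: lincomb_def if_distrib[where f = "\<lambda>x. x * _"] sum.delta fun_eq_iff cong: if_cong)

lemma lincomb_zero: "(\<And>i. i < k \<Longrightarrow> c i = 0) \<Longrightarrow> lincomb k c z = (\<lambda>_. 0)"
  by (simp add: lincomb_def)

lemma lincomb_cong:
  "k = k' \<Longrightarrow> (\<And>i. i < k' \<Longrightarrow> c i = d i) \<Longrightarrow> z = z' \<Longrightarrow> lincomb k c z = lincomb k' d z'"
  by (simp add: lincomb_def)

lemma lincomb_append:
  "lincomb (k + n) c (\<lambda>i. if i < k then y i else w (i - k)) =
   (\<lambda>x. lincomb k c y x + lincomb n (\<lambda>j. c (k + j)) w x)"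
  by (induction n) (auto simp: lincomb_def fun_eq_iff intro!: sum.cong)

context
  fixes W :: "('b \<Rightarrow> rat) set"
  assumes W: "rat_subspace W"
begin

lemma subspace_zero: "(\<lambda>_. 0) \<in> W"
  using W by (simp add: rat_subspace_def)

lemma subspace_add: "u \<in> W \<Longrightarrow> v \<in> W \<Longrightarrow> (\<lambda>x. u x + v x) \<in> W"
  using W by (simp add: rat_subspace_def)

lemma subspace_scale: "u \<in> W \<Longrightarrow> (\<lambda>x. c * u x) \<in> W"
  using W by (simp add: rat_subspace_def)

lemma subspace_diff: "u \<in> W \<Longrightarrow> v \<in> W \<Longrightarrow> (\<lambda>x. u x - v x) \<in> W"
  using subspace_add[of u "\<lambda>x. (-1) * v x"] subspace_scale[of v "-1"] by simp

lemma subspace_lincomb: "(\<And>i. i < k \<Longrightarrow> z i \<in> W) \<Longrightarrow> lincomb k c z \<in> W"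
proof (induction k)
  case 0
  then show ?case by (simp add: lincomb_def subspace_zero)
next
  case (Suc k)
  then show ?case
    using subspace_add[OF _ subspace_scale[of "z k" "c k"]] by (simp add: lincomb_def)
qed

lemma equiv_mod_sym: "equiv_mod W u v \<Longrightarrow> equiv_mod W v u"
  unfolding equiv_mod_def using subspace_scale[of "\<lambda>x. u x - v x" "-1"] by simp

lemma equiv_mod_trans: "equiv_mod W u v \<Longrightarrow> equiv_mod W v w \<Longrightarrow> equiv_mod W u w"
  unfolding equiv_mod_def using subspace_add[of "\<lambda>x. u x - v x" "\<lambda>x. v x - w x"] by simp

lemma equiv_mod_lincomb:
  "(\<And>i. i < k \<Longrightarrow> equiv_mod W (u i) (v i)) \<Longrightarrow> equiv_mod W (lincomb k c u) (lincomb k c v)"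
  using subspace_lincomb[of k "\<lambda>i x. u i x - v i x" c]
  by (simp add: equiv_mod_def lincomb_def sum_subtractf right_diff_distrib)

lemma equiv_mod_lincomb_lincomb:
  assumes "\<And>i. i < k \<Longrightarrow> equiv_mod W (z i) (lincomb n (d i) w)"
  shows "equiv_mod W (lincomb k c z) (lincomb n (\<lambda>m. \<Sum>i<k. c i * d i m) w)"
  using equiv_mod_lincomb[OF assms] by (simp add: lincomb_lincomb)

lemma independent_mod_coeffs_unique:
  assumes "independent_mod W k z" and "equiv_mod W (lincomb k c z) (lincomb k d z)" and "i < k"
  shows "c i = d i"
  using assms by (auto simp: independent_mod_def equiv_mod_def lincomb_diff)

end

lemma rat_linear_sum:
  "rat_linear g \<Longrightarrow> finite (A :: nat set) \<Longrightarrow>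
   g (\<lambda>x. \<Sum>i\<in>A. c i * u i x) = (\<lambda>x. \<Sum>i\<in>A. c i * g (u i) x)"
  by (simp add: rat_linear_def)

lemma rat_linear_lincomb: "rat_linear g \<Longrightarrow> g (lincomb k c z) = lincomb k c (\<lambda>i. g (z i))"
  by (simp add: lincomb_def rat_linear_sum)

lemma rat_linear_zero: "rat_linear g \<Longrightarrow> g (\<lambda>_. 0) = (\<lambda>_. 0)"
  using rat_linear_sum[of g "{}"] by simp

lemma rat_linear_add: "rat_linear g \<Longrightarrow> g (\<lambda>x. u x + v x) = (\<lambda>x. g u x + g v x)"
  using rat_linear_sum[of g "{0, 1}" "\<lambda>_. 1" "\<lambda>i. if i = 0 then u else v"] by simp

lemma rat_linear_scale: "rat_linear g \<Longrightarrow> g (\<lambda>x. c * u x) = (\<lambda>x. c * g u x)"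
  using rat_linear_sum[of g "{0}" "\<lambda>_. c" "\<lambda>_. u"] by simp

lemma rat_linear_diff: "rat_linear g \<Longrightarrow> g (\<lambda>x. u x - v x) = (\<lambda>x. g u x - g v x)"
  using rat_linear_sum[of g "{0, 1}" "\<lambda>i. if i = 0 then 1 else -1" "\<lambda>i. if i = 0 then u else v"]
  by simp

lemma equiv_mod_image:
  "rat_linear g \<Longrightarrow> (\<forall>b\<in>B. g b \<in> B) \<Longrightarrow> equiv_mod B u v \<Longrightarrow> equiv_mod B (g u) (g v)"
  by (simp add: equiv_mod_def rat_linear_diff[symmetric])

lemma rat_subspace_kernel: "rat_subspace C \<Longrightarrow> rat_linear d \<Longrightarrow> rat_subspace {c \<in> C. d c = (\<lambda>_. 0)}"
  by (simp add: rat_subspace_def rat_linear_zero rat_linear_add rat_linear_scale)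

lemma rat_subspace_image: "rat_subspace C \<Longrightarrow> rat_linear d \<Longrightarrow> rat_subspace (d ` C)"
  unfolding rat_subspace_def
  by (auto simp flip: rat_linear_zero rat_linear_add rat_linear_scale intro!: imageI)

lemma rat_subspace_zero_space: "rat_subspace {\<lambda>_. 0}"
  by (simp add: rat_subspace_def)

interpretation rat_functions: vector_space "\<lambda>(c :: rat) (f :: 'b \<Rightarrow> rat) x. c * f x"
  by unfold_locales (simp_all add: fun_eq_iff algebra_simps)

lemma sum_fun_apply: "(\<Sum>v\<in>A. f v) x = (\<Sum>v\<in>A. f v x)"
  by (induction A rule: infinite_finite_induct) auto

text \<open>Functions supported in \<open>S\<close> lie in the span of the \<open>card S\<close> indicator functions.\<close>
lemma independent_card_le:
  assumes S: "finite S" and supp: "\<And>i x. i < k \<Longrightarrow> z i x \<noteq> 0 \<Longrightarrow> x \<in> S"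
    and indep: "\<And>c i. lincomb k c z = (\<lambda>_. 0) \<Longrightarrow> i < k \<Longrightarrow> c i = 0"
  shows "k \<le> card S"
proof -
  have inj: "inj_on z {..<k}"
  proof (rule inj_onI)
    fix i j assume ij: "i \<in> {..<k}" "j \<in> {..<k}" "z i = z j"
    have "lincomb k (\<lambda>l. (if l = i then 1 else 0) - (if l = j then 1 else 0)) z = (\<lambda>_. 0)"
      using ij by (simp flip: lincomb_diff add: lincomb_delta)
    from indep[OF this, of i] ij show "i = j"
      by (auto split: if_splits)
  qed
  have "rat_functions.independent (z ` {..<k})"
  proof (rule rat_functions.independent_if_scalars_zero)
    fix u w
    assume sum_zero: "(\<Sum>v\<in>z ` {..<k}. (\<lambda>x. u v * v x)) = 0" and "w \<in> z ` {..<k}"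
    then obtain i where i: "i < k" "w = z i"
      by blast
    have "lincomb k (\<lambda>i. u (z i)) z = (\<lambda>x. \<Sum>v\<in>z ` {..<k}. u v * v x)"
      by (simp add: lincomb_def sum.reindex[OF inj])
    also have "\<dots> = (\<lambda>_. 0)"
      using sum_zero by (simp add: fun_eq_iff sum_fun_apply)
    finally show "u w = 0"
      using indep i by blast
  qed simp
  moreover have "z ` {..<k} \<subseteq> rat_functions.span ((\<lambda>s x. if x = s then 1 else 0) ` S)"
  proof clarify
    fix i assume i: "i < k"
    have pointwise: "(\<Sum>s\<in>S. z i s * (if x = s then 1 else 0)) = z i x" for x
    proof -
      have "(\<Sum>s\<in>S. z i s * (if x = s then 1 else 0)) = (\<Sum>s\<in>S. if x = s then z i x else 0)"
        by (rule sum.cong) auto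
      also have "\<dots> = z i x"
        using S supp[OF i, of x] by (cases "x \<in> S") auto
      finally show ?thesis .
    qed
    have "z i = (\<Sum>s\<in>S. (\<lambda>x. z i s * (if x = s then 1 else 0)))"
      by (simp only: fun_eq_iff sum_fun_apply pointwise) simp
    also have "\<dots> \<in> rat_functions.span ((\<lambda>s x. if x = s then 1 else 0) ` S)"
      by (intro rat_functions.span_sum rat_functions.span_scale rat_functions.span_base) auto
    finally show "z i \<in> rat_functions.span ((\<lambda>s x. if x = s then 1 else 0) ` S)" .
  qed
  ultimately have "card (z ` {..<k}) \<le> card ((\<lambda>s x. if x = s then 1 else (0 :: rat)) ` S)"
    using rat_functions.independent_span_bound S by blast
  then show ?thesis
    using card_image[OF inj] card_image_le[OF S, of "\<lambda>s x. if x = s then 1 else (0 :: rat)"] by simp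
qed

lemma change_of_basis_inverse:
  assumes B: "rat_subspace B" and indep: "independent_mod B k z"
    and P: "\<And>i. i < k' \<Longrightarrow> equiv_mod B (z' i) (lincomb k (P i) z)"
    and Q: "\<And>l. l < k \<Longrightarrow> equiv_mod B (z l) (lincomb k' (Q l) z')"
    and l: "l < k" and j: "j < k"
  shows "(if j = l then 1 else 0) = (\<Sum>i<k'. Q l i * P i j)"
proof -
  note equiv_mod_trans[OF B, trans]
  have "equiv_mod B (lincomb k (\<lambda>j. if j = l then 1 else 0) z) (lincomb k' (Q l) z')"
    using Q[OF l] lincomb_delta[OF l, of z] by simp
  also have "equiv_mod B \<dots> (lincomb k (\<lambda>j. \<Sum>i<k'. Q l i * P i j) z)"
    using P by (rule equiv_mod_lincomb_lincomb[OF B])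
  finally show ?thesis
    by (rule independent_mod_coeffs_unique[OF B indep _ j])
qed

lemma change_of_basis_matrix:
  assumes B: "rat_subspace B" and g: "rat_linear g" and gB: "\<forall>b\<in>B. g b \<in> B"
    and a: "\<And>j. j < k \<Longrightarrow> equiv_mod B (g (z j)) (lincomb k (a j) z)"
    and a': "\<And>i. i < k' \<Longrightarrow> equiv_mod B (g (z' i)) (lincomb k' (a' i) z')"
    and indep': "independent_mod B k' z'"
    and P: "\<And>i. i < k' \<Longrightarrow> equiv_mod B (z' i) (lincomb k (P i) z)"
    and Q: "\<And>l. l < k \<Longrightarrow> equiv_mod B (z l) (lincomb k' (Q l) z')"
    and i: "i < k'" and m: "m < k'"
  shows "a' i m = (\<Sum>l<k. (\<Sum>j<k. P i j * a j l) * Q l m)"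
proof -
  note equiv_mod_trans[OF B, trans]
  have "equiv_mod B (lincomb k' (a' i) z') (g (z' i))"
    using a'[OF i] by (rule equiv_mod_sym[OF B])
  also have "equiv_mod B (g (z' i)) (lincomb k (P i) (\<lambda>j. g (z j)))"
    using equiv_mod_image[OF g gB P[OF i]] by (simp add: rat_linear_lincomb[OF g])
  also have "equiv_mod B \<dots> (lincomb k (\<lambda>l. \<Sum>j<k. P i j * a j l) z)"
    using a by (rule equiv_mod_lincomb_lincomb[OF B])
  also have "equiv_mod B \<dots> (lincomb k' (\<lambda>m. \<Sum>l<k. (\<Sum>j<k. P i j * a j l) * Q l m) z')"
    using Q by (rule equiv_mod_lincomb_lincomb[OF B])
  finally show ?thesis
    by (rule independent_mod_coeffs_unique[OF B indep' _ m])
qed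

text \<open>With \<open>a' = P a Q\<close> and \<open>Q P = 1\<close>, the trace of \<open>a'\<close> is that of \<open>a Q P = a\<close>.\<close>
lemma quotient_matrix_trace_unique:
  assumes B: "rat_subspace B" and g: "rat_linear g" and gB: "\<forall>b\<in>B. g b \<in> B"
    and M: "quotient_matrix Z B g k z a" and M': "quotient_matrix Z B g k' z' a'"
  shows "(\<Sum>i<k'. a' i i) = (\<Sum>i<k. a i i)"
proof -
  from M have indep: "independent_mod B k z"
    and a: "\<And>j. j < k \<Longrightarrow> equiv_mod B (g (z j)) (lincomb k (a j) z)"
    by (simp_all add: quotient_matrix_def)
  from M' have indep': "independent_mod B k' z'"
    and a': "\<And>i. i < k' \<Longrightarrow> equiv_mod B (g (z' i)) (lincomb k' (a' i) z')"
    by (simp_all add: quotient_matrix_def)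
  have "\<forall>i\<in>{..<k'}. \<exists>c. equiv_mod B (z' i) (lincomb k c z)"
    using M M' by (simp add: quotient_matrix_def)
  then obtain P where P: "\<And>i. i < k' \<Longrightarrow> equiv_mod B (z' i) (lincomb k (P i) z)"
    by (auto dest!: bchoice)
  have "\<forall>l\<in>{..<k}. \<exists>c. equiv_mod B (z l) (lincomb k' c z')"
    using M M' by (simp add: quotient_matrix_def)
  then obtain Q where Q: "\<And>l. l < k \<Longrightarrow> equiv_mod B (z l) (lincomb k' (Q l) z')"
    by (auto dest!: bchoice)
  have "(\<Sum>i<k'. a' i i) = (\<Sum>i<k'. \<Sum>l<k. \<Sum>j<k. P i j * a j l * Q l i)"
    by (intro sum.cong refl)
      (simp add: change_of_basis_matrix[OF B g gB a a' indep' P Q] sum_distrib_right)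
  also have "\<dots> = (\<Sum>l<k. \<Sum>i<k'. \<Sum>j<k. P i j * a j l * Q l i)"
    by (rule sum.swap)
  also have "\<dots> = (\<Sum>l<k. \<Sum>j<k. \<Sum>i<k'. P i j * a j l * Q l i)"
    by (rule sum.cong[OF refl], rule sum.swap)
  also have "\<dots> = (\<Sum>j<k. \<Sum>l<k. a j l * (\<Sum>i<k'. Q l i * P i j))"
    by (subst sum.swap) (simp add: sum_distrib_left mult.commute mult.left_commute)
  also have "\<dots> = (\<Sum>j<k. a j j)"
    by (simp add: change_of_basis_inverse[OF B indep P Q, symmetric]
        if_distrib[where f = "\<lambda>x. _ * x"] sum.delta cong: if_cong)
  finally show ?thesis .
qed

lemma quot_trace_eq:
  assumes "rat_subspace B" and "rat_linear g" and "\<forall>b\<in>B. g b \<in> B"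
    and "quotient_matrix Z B g k z a"
  shows "quot_trace Z B g = (\<Sum>i<k. a i i)"
  unfolding quot_trace_eq_Eps
  by (rule someI2[where a = "\<Sum>i<k. a i i"]) (use assms quotient_matrix_trace_unique in blast)+

lemma independent_mod_extend:
  assumes B: "rat_subspace B" and indep: "independent_mod B k z"
    and not_span: "\<nexists>c. equiv_mod B w (lincomb k c z)"
  shows "independent_mod B (Suc k) (z(k := w))"
  unfolding independent_mod_def
proof (intro allI impI)
  fix c i assume c: "lincomb (Suc k) c (z(k := w)) \<in> B" and i: "i < Suc k"
  have split: "lincomb (Suc k) c (z(k := w)) = (\<lambda>x. lincomb k c z x + c k * w x)"
    by (simp add: lincomb_def)
  have c_last: "c k = 0"
  proof (rule ccontr)
    assume nz: "c k \<noteq> 0"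
    have "(\<lambda>x. (1 / c k) * lincomb (Suc k) c (z(k := w)) x) \<in> B"
      using subspace_scale[OF B c] .
    also have "(\<lambda>x. (1 / c k) * lincomb (Suc k) c (z(k := w)) x) =
        (\<lambda>x. w x - lincomb k (\<lambda>i. - c i / c k) z x)"
      using nz
      by (simp add: split lincomb_def fun_eq_iff field_simps sum_negf sum_divide_distrib[symmetric])
    finally show False
      using not_span by (auto simp: equiv_mod_def)
  qed
  then have "lincomb k c z \<in> B"
    using c split by simp
  with c_last indep i show "c i = 0"
    by (auto simp: independent_mod_def less_Suc_eq)
qed

text \<open>A maximal family independent modulo \<open>B\<close> spans \<open>Z\<close> modulo \<open>B\<close>; maximal families exist since
  their length is bounded by the size of the common support.\<close>
lemma quotient_matrix_exists:
  assumes B: "rat_subspace B" and Z: "rat_subspace Z" and BZ: "B \<subseteq> Z" and S: "finite S"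
    and supp: "\<forall>u\<in>Z. \<forall>x. u x \<noteq> 0 \<longrightarrow> x \<in> S" and gZ: "\<forall>u\<in>Z. g u \<in> Z"
  shows "\<exists>k z a. quotient_matrix Z B g k z a"
proof -
  define K where "K = {k. \<exists>z. (\<forall>i<k. z i \<in> Z) \<and> independent_mod B k z}"
  have "K \<subseteq> {..card S}"
  proof
    fix k assume "k \<in> K"
    then obtain z where "\<forall>i<k. z i \<in> Z" "independent_mod B k z"
      unfolding K_def by blast
    then have "k \<le> card S"
      using S supp subspace_zero[OF B]
      by (intro independent_card_le[of S k z]) (auto simp: independent_mod_def)
    then show "k \<in> {..card S}" by simp
  qed
  then have "finite K"
    using finite_subset by blast
  moreover have "0 \<in> K"
    by (simp add: K_def independent_mod_def)
  ultimately have "Max K \<in> K" and Max_ge: "\<And>k. k \<in> K \<Longrightarrow> k \<le> Max K"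
    by (auto intro: Max_in)
  then obtain z where z: "\<forall>i<Max K. z i \<in> Z" and indep: "independent_mod B (Max K) z"
    unfolding K_def by blast
  have span: "\<exists>c. equiv_mod B w (lincomb (Max K) c z)" if w: "w \<in> Z" for w
  proof (rule ccontr)
    assume "\<nexists>c. equiv_mod B w (lincomb (Max K) c z)"
    then have "independent_mod B (Suc (Max K)) (z(Max K := w))"
      by (rule independent_mod_extend[OF B indep])
    moreover have "\<forall>i<Suc (Max K). (z(Max K := w)) i \<in> Z"
      using z w by (auto simp: less_Suc_eq)
    ultimately have "Suc (Max K) \<in> K"
      unfolding K_def by blast
    then show False
      using Max_ge by fastforce
  qed
  have "\<forall>i\<in>{..<Max K}. \<exists>c. equiv_mod B (g (z i)) (lincomb (Max K) c z)"
    using span z gZ by blast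
  then obtain a where "\<And>i. i < Max K \<Longrightarrow> equiv_mod B (g (z i)) (lincomb (Max K) (a i) z)"
    by (auto dest!: bchoice)
  then have "quotient_matrix Z B g (Max K) z a"
    using z indep span by (auto simp: quotient_matrix_def)
  then show ?thesis
    by blast
qed

lemma quot_trace_trivial:
  assumes "rat_subspace W" and "rat_linear g" and "\<forall>w\<in>W. g w \<in> W"
  shows "quot_trace W W g = 0"
proof -
  have "quotient_matrix W W g 0 (\<lambda>_ _. 0) (\<lambda>_ _. 0)"
    by (simp add: quotient_matrix_def independent_mod_def equiv_mod_def lincomb_def)
  from quot_trace_eq[OF assms this] show ?thesis by simp
qed

lemma independent_mod_append:
  assumes Y: "rat_subspace Y" and BY: "B \<subseteq> Y" and y: "\<forall>i<k1. y i \<in> Y"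
    and indep1: "independent_mod B k1 y" and indep2: "independent_mod Y k2 w"
  shows "independent_mod B (k1 + k2) (\<lambda>i. if i < k1 then y i else w (i - k1))"
  unfolding independent_mod_def
proof (intro allI impI)
  fix c i assume c: "lincomb (k1 + k2) c (\<lambda>i. if i < k1 then y i else w (i - k1)) \<in> B"
    and i: "i < k1 + k2"
  have "lincomb k1 c y \<in> Y"
    using y by (intro subspace_lincomb[OF Y]) auto
  moreover have "(\<lambda>x. lincomb k1 c y x + lincomb k2 (\<lambda>j. c (k1 + j)) w x) \<in> Y"
    using c BY by (auto simp: lincomb_append)
  ultimately have "lincomb k2 (\<lambda>j. c (k1 + j)) w \<in> Y"
    using subspace_diff[OF Y] by fastforce
  then have upper: "\<forall>j<k2. c (k1 + j) = 0"
    using indep2 unfolding independent_mod_def by blast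
  then have "lincomb k1 c y \<in> B"
    using c by (simp add: lincomb_append lincomb_zero)
  then have "\<forall>j<k1. c j = 0"
    using indep1 by (simp add: independent_mod_def)
  with upper i show "c i = 0"
    by (metis add_diff_inverse_nat nat_add_left_cancel_less)
qed

lemma span_mod_append:
  assumes span1: "\<forall>u\<in>Y. \<exists>c. equiv_mod B u (lincomb k1 c y)"
    and span2: "\<forall>u\<in>Z. \<exists>c. equiv_mod Y u (lincomb k2 c w)" and u: "u \<in> Z"
  shows "\<exists>c. equiv_mod B u (lincomb (k1 + k2) c (\<lambda>i. if i < k1 then y i else w (i - k1)))"
proof -
  obtain d where "equiv_mod Y u (lincomb k2 d w)"
    using span2 u by blast
  then obtain e where "equiv_mod B (\<lambda>x. u x - lincomb k2 d w x) (lincomb k1 e y)"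
    using span1 by (auto simp: equiv_mod_def)
  then have "equiv_mod B u (lincomb (k1 + k2) (\<lambda>i. if i < k1 then e i else d (i - k1))
      (\<lambda>i. if i < k1 then y i else w (i - k1)))"
    by (simp add: lincomb_append equiv_mod_def algebra_simps cong: lincomb_cong)
  then show ?thesis
    by blast
qed

lemma quotient_matrix_append:
  assumes B: "rat_subspace B" and Y: "rat_subspace Y" and BY: "B \<subseteq> Y" and YZ: "Y \<subseteq> Z"
    and M1: "quotient_matrix Y B g k1 y a1" and M2: "quotient_matrix Z Y g k2 w a2"
  shows "\<exists>a. quotient_matrix Z B g (k1 + k2) (\<lambda>i. if i < k1 then y i else w (i - k1)) a \<and>
             (\<Sum>i<k1 + k2. a i i) = (\<Sum>i<k1. a1 i i) + (\<Sum>j<k2. a2 j j)"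
proof -
  let ?z = "\<lambda>i. if i < k1 then y i else w (i - k1)"
  from M1 have y: "\<forall>i<k1. y i \<in> Y" and indep1: "independent_mod B k1 y"
    and span1: "\<forall>u\<in>Y. \<exists>c. equiv_mod B u (lincomb k1 c y)"
    and a1: "\<forall>i<k1. equiv_mod B (g (y i)) (lincomb k1 (a1 i) y)"
    unfolding quotient_matrix_def by blast+
  from M2 have w: "\<forall>i<k2. w i \<in> Z" and indep2: "independent_mod Y k2 w"
    and span2: "\<forall>u\<in>Z. \<exists>c. equiv_mod Y u (lincomb k2 c w)"
    and a2: "\<forall>i<k2. equiv_mod Y (g (w i)) (lincomb k2 (a2 i) w)"
    unfolding quotient_matrix_def by blast+
  txt \<open>The error of row \<open>i\<close> of \<open>a2\<close> lies in \<open>Y\<close>; its coordinates in \<open>Y / B\<close> fill the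
    off-diagonal block.\<close>
  have "\<forall>i\<in>{..<k2}. \<exists>e. equiv_mod B (\<lambda>x. g (w i) x - lincomb k2 (a2 i) w x) (lincomb k1 e y)"
    using a2 span1 by (simp add: equiv_mod_def)
  then obtain E where E: "\<And>i. i < k2 \<Longrightarrow>
      equiv_mod B (\<lambda>x. g (w i) x - lincomb k2 (a2 i) w x) (lincomb k1 (E i) y)"
    by (auto dest!: bchoice)
  define a where "a i j = (if i < k1 then (if j < k1 then a1 i j else 0)
      else (if j < k1 then E (i - k1) j else a2 (i - k1) (j - k1)))" for i j
  have "independent_mod B (k1 + k2) ?z"
    by (rule independent_mod_append[OF Y BY y indep1 indep2])
  moreover have "\<exists>c. equiv_mod B u (lincomb (k1 + k2) c ?z)" if "u \<in> Z" for u
    by (rule span_mod_append[OF span1 span2 that])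
  moreover have "equiv_mod B (g (?z i)) (lincomb (k1 + k2) (a i) ?z)" if i: "i < k1 + k2" for i
  proof (cases "i < k1")
    case True
    then show ?thesis
      using a1 by (simp add: a_def lincomb_append lincomb_zero cong: lincomb_cong)
  next
    case False
    then show ?thesis
      using E[of "i - k1"] i
      by (simp add: a_def lincomb_append equiv_mod_def algebra_simps cong: lincomb_cong)
  qed
  moreover have "\<forall>i<k1 + k2. ?z i \<in> Z"
    using y w YZ by auto
  moreover have "(\<Sum>i<k1 + k2. a i i) = (\<Sum>i<k1. a1 i i) + (\<Sum>j<k2. a2 j j)"
    by (induction k2) (simp_all add: a_def)
  ultimately show ?thesis
    unfolding quotient_matrix_def by blast
qed

lemma quot_trace_add:
  assumes B: "rat_subspace B" and Y: "rat_subspace Y" and Z: "rat_subspace Z"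
    and BY: "B \<subseteq> Y" and YZ: "Y \<subseteq> Z"
    and S: "finite S" and supp: "\<forall>u\<in>Z. \<forall>x. u x \<noteq> 0 \<longrightarrow> x \<in> S" and g: "rat_linear g"
    and gB: "\<forall>b\<in>B. g b \<in> B" and gY: "\<forall>u\<in>Y. g u \<in> Y" and gZ: "\<forall>u\<in>Z. g u \<in> Z"
  shows "quot_trace Z B g = quot_trace Z Y g + quot_trace Y B g"
proof -
  obtain k1 y a1 where M1: "quotient_matrix Y B g k1 y a1"
    using quotient_matrix_exists[OF B Y BY S _ gY] supp YZ by blast
  obtain k2 w a2 where M2: "quotient_matrix Z Y g k2 w a2"
    using quotient_matrix_exists[OF Y Z YZ S supp gZ] by blast
  obtain a where M: "quotient_matrix Z B g (k1 + k2) (\<lambda>i. if i < k1 then y i else w (i - k1)) a"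
    and "(\<Sum>i<k1 + k2. a i i) = (\<Sum>i<k1. a1 i i) + (\<Sum>j<k2. a2 j j)"
    using quotient_matrix_append[OF B Y BY YZ M1 M2] by blast
  then show ?thesis
    using quot_trace_eq[OF B g gB M] quot_trace_eq[OF Y g gY M2] quot_trace_eq[OF B g gB M1] by simp
qed

lemma quot_trace_kernel_image:
  assumes C: "rat_subspace C" and d: "rat_linear d" and g: "rat_linear g" and h: "rat_linear h"
    and gC: "\<forall>u\<in>C. g u \<in> C" and comm: "\<forall>u\<in>C. d (g u) = h (d u)"
    and S: "finite S" and supp: "\<forall>u\<in>C. \<forall>x. u x \<noteq> 0 \<longrightarrow> x \<in> S"
  shows "quot_trace C {u \<in> C. d u = (\<lambda>_. 0)} g = quot_trace (d ` C) {\<lambda>_. 0} h"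
proof -
  let ?K = "{u \<in> C. d u = (\<lambda>_. 0)}"
  have K: "rat_subspace ?K"
    by (rule rat_subspace_kernel[OF C d])
  have gK: "\<forall>u\<in>?K. g u \<in> ?K"
    using gC comm rat_linear_zero[OF h] by auto
  obtain k w a where M: "quotient_matrix C ?K g k w a"
    using quotient_matrix_exists[OF K C _ S supp gC] by blast
  then have w: "\<forall>i<k. w i \<in> C" and indep: "independent_mod ?K k w"
    and span: "\<forall>u\<in>C. \<exists>c. equiv_mod ?K u (lincomb k c w)"
    and a: "\<forall>i<k. equiv_mod ?K (g (w i)) (lincomb k (a i) w)"
    unfolding quotient_matrix_def by blast+
  have equiv_mod_kernel: "equiv_mod ?K u v \<longleftrightarrow> d u = d v" if "u \<in> C" "v \<in> C" for u v
    using that subspace_diff[OF C] by (auto simp: equiv_mod_def rat_linear_diff[OF d] fun_eq_iff)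
  have d_lincomb: "d (lincomb k c w) = lincomb k c (\<lambda>i. d (w i))" for c
    by (rule rat_linear_lincomb[OF d])
  have lincomb_C: "lincomb k c w \<in> C" for c
    using w by (intro subspace_lincomb[OF C]) auto
  have "quotient_matrix (d ` C) {\<lambda>_. 0} h k (\<lambda>i. d (w i)) a"
    unfolding quotient_matrix_def
  proof (intro conjI allI impI ballI)
    show "d (w i) \<in> d ` C" if "i < k" for i
      using w that by blast
    show "independent_mod {\<lambda>_. 0} k (\<lambda>i. d (w i))"
      using indep lincomb_C by (simp add: independent_mod_def d_lincomb)
    show "\<exists>c. equiv_mod {\<lambda>_. 0} u (lincomb k c (\<lambda>i. d (w i)))" if "u \<in> d ` C" for u
      using that span equiv_mod_kernel lincomb_C by (force simp: equiv_mod_def d_lincomb fun_eq_iff)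
    show "equiv_mod {\<lambda>_. 0} (h (d (w i))) (lincomb k (a i) (\<lambda>i. d (w i)))" if "i < k" for i
      using that a w gC comm equiv_mod_kernel lincomb_C
      by (force simp: equiv_mod_def d_lincomb fun_eq_iff)
  qed
  then show ?thesis
    using quot_trace_eq[OF K g gK M] quot_trace_eq[OF rat_subspace_zero_space h]
      rat_linear_zero[OF h]
    by simp
qed

section \<open>The Hopf trace formula\<close>

lemma chains_add:
  "u \<in> chains X adj q \<Longrightarrow> v \<in> chains X adj q \<Longrightarrow> (\<lambda>x. u x + v x) \<in> chains X adj q"
  unfolding chains_def mem_Collect_eq by (metis add.right_neutral)

lemma chains_scale: "u \<in> chains X adj q \<Longrightarrow> (\<lambda>x. c * u x) \<in> chains X adj q"
  unfolding chains_def by simp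

lemma rat_subspace_chains: "rat_subspace (chains X adj q)"
  by (simp add: rat_subspace_def chains_add chains_scale) (simp add: chains_def)

lemma rat_linear_bdry: "rat_linear (bdry X adj q)"
  by (simp add: rat_linear_def bdry_sum)

lemma rat_linear_chain_map: "rat_linear (chain_map X adj f q)"
  by (simp add: rat_linear_def chain_map_sum)

lemma rat_subspace_cycles: "rat_subspace (cycles X adj q)"
  unfolding cycles_def by (rule rat_subspace_kernel[OF rat_subspace_chains rat_linear_bdry])

lemma rat_subspace_boundaries: "rat_subspace (boundaries X adj q)"
  unfolding boundaries_def by (rule rat_subspace_image[OF rat_subspace_chains rat_linear_bdry])

lemma boundaries_subset_cycles:
  assumes "finite X"
  shows "boundaries X adj q \<subseteq> cycles X adj q"
proof
  fix b assume "b \<in> boundaries X adj q"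
  then obtain c where "b = bdry X adj (Suc q) c"
    unfolding boundaries_def by blast
  then show "b \<in> cycles X adj q"
    using bdry_chains bdry_bdry[OF assms] by (simp add: cycles_def)
qed

lemma cycles_subset_chains: "cycles X adj q \<subseteq> chains X adj q"
  unfolding cycles_def by blast

lemma zero_in_boundaries: "(\<lambda>_. 0) \<in> boundaries X adj q"
proof -
  have "(\<lambda>_. 0) = bdry X adj (Suc q) (\<lambda>_. 0)"
    by (rule rat_linear_zero[OF rat_linear_bdry, symmetric])
  moreover have "(\<lambda>_. 0) \<in> chains X adj (Suc q)"
    by (simp add: chains_def)
  ultimately show ?thesis
    unfolding boundaries_def by (rule image_eqI)
qed

lemma chain_map_cycles:
  assumes X: "finite X" and f: "digitally_continuous X adj f" and u: "u \<in> cycles X adj q"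
  shows "chain_map X adj f q u \<in> cycles X adj q"
proof -
  have "bdry X adj q (chain_map X adj f q u) = (\<lambda>_. 0)"
  proof (cases q)
    case 0
    then show ?thesis by (simp add: bdry_def)
  next
    case (Suc p)
    then show ?thesis
      using u bdry_chain_map[OF X f, of p u] rat_linear_zero[OF rat_linear_chain_map]
      by (simp add: cycles_def)
  qed
  then show ?thesis
    by (simp add: cycles_def chain_map_chains[OF f])
qed

lemma chain_map_boundaries:
  assumes X: "finite X" and f: "digitally_continuous X adj f" and b: "b \<in> boundaries X adj q"
  shows "chain_map X adj f q b \<in> boundaries X adj q"
  using b bdry_chain_map[OF X f, of q, symmetric] chain_map_chains[OF f]
  by (auto simp: boundaries_def)

text \<open>The flag \<open>0 \<subseteq> B\<^sub>q \<subseteq> Z\<^sub>q \<subseteq> C\<^sub>q\<close> together with \<open>C\<^sub>q / Z\<^sub>q \<cong> B\<^sub>q\<^sub>-\<^sub>1\<close> via the boundary map.\<close>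
lemma chain_trace_decomposition:
  assumes X: "finite X" and f: "digitally_continuous X adj f"
  defines "tr_B q \<equiv> quot_trace (boundaries X adj q) {\<lambda>_. 0} (chain_map X adj f q)"
  shows "quot_trace (chains X adj q) {\<lambda>_. 0} (chain_map X adj f q) =
    (case q of 0 \<Rightarrow> 0 | Suc p \<Rightarrow> tr_B p) +
    quot_trace (cycles X adj q) (boundaries X adj q) (chain_map X adj f q) + tr_B q"
proof -
  let ?g = "chain_map X adj f"
  have supp: "\<forall>u\<in>chains X adj q. \<forall>x. u x \<noteq> 0 \<longrightarrow> x \<in> simplices X adj q"
    by (simp add: chains_def)
  have g0: "\<forall>u\<in>{\<lambda>_. 0}. ?g q u \<in> {\<lambda>_. 0}"
    using rat_linear_zero[OF rat_linear_chain_map] by simp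
  have gC: "\<forall>u\<in>chains X adj q. ?g q u \<in> chains X adj q"
    using chain_map_chains[OF f] by blast
  have gZ: "\<forall>u\<in>cycles X adj q. ?g q u \<in> cycles X adj q"
    using chain_map_cycles[OF X f] by blast
  have gB: "\<forall>u\<in>boundaries X adj q. ?g q u \<in> boundaries X adj q"
    using chain_map_boundaries[OF X f] by blast
  have 0: "{\<lambda>_. 0} \<subseteq> boundaries X adj q"
    using zero_in_boundaries by blast
  have B: "boundaries X adj q \<subseteq> cycles X adj q"
    by (rule boundaries_subset_cycles[OF X])
  have "quot_trace (chains X adj q) {\<lambda>_. 0} (?g q) =
      quot_trace (chains X adj q) (cycles X adj q) (?g q) +
      quot_trace (cycles X adj q) {\<lambda>_. 0} (?g q)"
    by (rule quot_trace_add[OF rat_subspace_zero_space rat_subspace_cycles rat_subspace_chains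
          order.trans[OF 0 B] cycles_subset_chains finite_simplices[OF X] supp rat_linear_chain_map
          g0 gZ gC])
  also have "quot_trace (cycles X adj q) {\<lambda>_. 0} (?g q) =
      quot_trace (cycles X adj q) (boundaries X adj q) (?g q) + tr_B q"
    unfolding tr_B_def
    using supp cycles_subset_chains
    by (intro quot_trace_add[OF rat_subspace_zero_space rat_subspace_boundaries rat_subspace_cycles
          0 B finite_simplices[OF X] _ rat_linear_chain_map g0 gB gZ]) blast
  also have "quot_trace (chains X adj q) (cycles X adj q) (?g q) =
      (case q of 0 \<Rightarrow> 0 | Suc p \<Rightarrow> tr_B p)"
  proof (cases q)
    case 0
    then have "cycles X adj q = chains X adj q"
      by (auto simp: cycles_def bdry_def)
    then show ?thesis
      using quot_trace_trivial[OF rat_subspace_chains rat_linear_chain_map gC] 0 by simp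
  next
    case (Suc p)
    have "quot_trace (chains X adj q) (cycles X adj q) (?g q) =
        quot_trace (bdry X adj q ` chains X adj q) {\<lambda>_. 0} (?g p)"
      unfolding cycles_def Suc
      using gC bdry_chain_map[OF X f] supp Suc
      by (intro quot_trace_kernel_image[OF rat_subspace_chains rat_linear_bdry rat_linear_chain_map
            rat_linear_chain_map _ _ finite_simplices[OF X]]) auto
    then show ?thesis
      by (simp add: Suc tr_B_def boundaries_def)
  qed
  finally show ?thesis
    by simp
qed

lemma alternating_sum_telescope:
  fixes c h b :: "nat \<Rightarrow> 'a :: comm_ring_1"
  assumes "\<And>q. c q = (case q of 0 \<Rightarrow> 0 | Suc p \<Rightarrow> b p) + h q + b q"
  shows "(\<Sum>q\<le>n. (-1) ^ q * c q) = (\<Sum>q\<le>n. (-1) ^ q * h q) + (-1) ^ n * b n"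
  by (induction n) (simp_all add: assms algebra_simps)

theorem hopf_trace_formula:
  assumes X: "finite X" and f: "digitally_continuous X adj f"
  shows "lefschetz X adj f =
    (\<Sum>q\<le>card X. (-1) ^ q * quot_trace (chains X adj q) {\<lambda>_. 0} (chain_map X adj f q))"
proof -
  have "boundaries X adj (card X) = {\<lambda>_. 0}"
    using X simplices_empty[OF X, of "Suc (card X)" adj] zero_in_boundaries
    by (auto simp: boundaries_def bdry_def chains_def)
  moreover have "quot_trace {\<lambda>_. 0} {\<lambda>_. 0} (chain_map X adj f (card X)) = 0"
    by (rule quot_trace_trivial[OF rat_subspace_zero_space rat_linear_chain_map])
      (simp add: rat_linear_zero[OF rat_linear_chain_map])
  ultimately have "quot_trace (boundaries X adj (card X)) {\<lambda>_. 0} (chain_map X adj f (card X)) = 0"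
    by simp
  then show ?thesis
    unfolding lefschetz_def
    using alternating_sum_telescope[OF chain_trace_decomposition[OF X f], of "card X"] by simp
qed

section \<open>Invariant simplices\<close>

lemma chains_coordinates:
  assumes X: "finite X" and e: "bij_betw e {..<k} (simplices X adj q)" and u: "u \<in> chains X adj q"
  shows "lincomb k (\<lambda>i. u (e i)) (\<lambda>i t. if t = e i then 1 else 0) = u"
proof
  fix t
  have "lincomb k (\<lambda>i. u (e i)) (\<lambda>i t. if t = e i then 1 else 0) t =
      (\<Sum>s\<in>simplices X adj q. u s * (if t = s then 1 else 0))"
    unfolding lincomb_def using sum.reindex_bij_betw[OF e, of "\<lambda>s. u s * (if t = s then 1 else 0)"]
    by simp
  also have "\<dots> = u t"
    using u finite_simplices[OF X]
    by (auto simp: chains_def if_distrib[where f = "\<lambda>x. _ * x"] sum.delta cong: if_cong)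
  finally show "lincomb k (\<lambda>i. u (e i)) (\<lambda>i t. if t = e i then 1 else 0) t = u t" .
qed

lemma quotient_matrix_simplex_basis:
  assumes X: "finite X" and f: "digitally_continuous X adj f"
    and e: "bij_betw e {..<k} (simplices X adj q)"
  defines "z \<equiv> \<lambda>i t. if t = e i then 1 else 0 :: rat"
  shows "quotient_matrix (chains X adj q) {\<lambda>_. 0} (chain_map X adj f q) k z
    (\<lambda>i j. chain_map X adj f q (z i) (e j))"
  unfolding quotient_matrix_def
proof (intro conjI allI impI ballI)
  show "z i \<in> chains X adj q" if "i < k" for i
    using e that by (auto simp: chains_def z_def bij_betw_def)
  have "lincomb k c z (e i) = c i" if i: "i < k" for c i
  proof -
    have "lincomb k c z (e i) = (\<Sum>j<k. if j = i then c j else 0)"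
      unfolding lincomb_def z_def using e i by (intro sum.cong) (auto simp: bij_betw_def inj_on_def)
    then show ?thesis
      using i by simp
  qed
  then show "independent_mod {\<lambda>_. 0} k z"
    unfolding independent_mod_def by (metis singletonD)
  show "\<exists>c. equiv_mod {\<lambda>_. 0} u (lincomb k c z)" if "u \<in> chains X adj q" for u
  proof
    show "equiv_mod {\<lambda>_. 0} u (lincomb k (\<lambda>i. u (e i)) z)"
      using chains_coordinates[OF X e that] by (simp add: equiv_mod_def z_def)
  qed
  show "equiv_mod {\<lambda>_. 0} (chain_map X adj f q (z i))
      (lincomb k (\<lambda>j. chain_map X adj f q (z i) (e j)) z)" for i
    using chains_coordinates[OF X e chain_map_chains[OF f, of q "z i"]]
    by (simp add: equiv_mod_def z_def)
qed

lemma chain_map_diagonal: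
  assumes X: "finite X" and s: "s \<in> simplices X adj q"
  shows "chain_map X adj f q (\<lambda>t. if t = s then 1 else 0) s =
    (if f ` s = s then (-1) ^ inversions (map f (sorted_list_of_set s)) else 0)"
proof -
  let ?sign = "(-1) ^ inversions (map f (sorted_list_of_set s)) :: rat"
  have "chain_map X adj f q (\<lambda>t. if t = s then 1 else 0) s =
      (\<Sum>s'\<in>simplices X adj q.
         if s' = s then (if f ` s = s \<and> card (f ` s) = Suc q then ?sign else 0) else 0)"
    unfolding chain_map_def by (rule sum.cong) auto
  also have "\<dots> = (if f ` s = s \<and> card (f ` s) = Suc q then ?sign else 0)"
    using s finite_simplices[OF X] by (simp add: sum.delta)
  finally show ?thesis
    using simplicesD[OF s] by auto
qed

lemma chain_trace_eq_sum_invariant_simplices: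
  assumes X: "finite X" and f: "digitally_continuous X adj f"
  shows "quot_trace (chains X adj q) {\<lambda>_. 0} (chain_map X adj f q) =
    (\<Sum>s\<in>{s \<in> simplices X adj q. f ` s = s}. (-1) ^ inversions (map f (sorted_list_of_set s)))"
proof -
  let ?S = "simplices X adj q"
  obtain e where e: "bij_betw e {..<card ?S} ?S"
    using ex_bij_betw_nat_finite[OF finite_simplices[OF X]] by (auto simp: atLeast0LessThan)
  have "\<forall>u\<in>{\<lambda>_. 0}. chain_map X adj f q u \<in> {\<lambda>_. 0}"
    using rat_linear_zero[OF rat_linear_chain_map] by simp
  then have "quot_trace (chains X adj q) {\<lambda>_. 0} (chain_map X adj f q) =
      (\<Sum>i<card ?S. chain_map X adj f q (\<lambda>t. if t = e i then 1 else 0) (e i))"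
    by (rule quot_trace_eq[OF rat_subspace_zero_space rat_linear_chain_map _
          quotient_matrix_simplex_basis[OF X f e]])
  also have "\<dots> = (\<Sum>s\<in>?S. chain_map X adj f q (\<lambda>t. if t = s then 1 else 0) s)"
    by (rule sum.reindex_bij_betw[OF e])
  also have "\<dots> = (\<Sum>s\<in>{s \<in> ?S. f ` s = s}. (-1) ^ inversions (map f (sorted_list_of_set s)))"
    by (simp add: chain_map_diagonal[OF X] sum.inter_filter[OF finite_simplices[OF X]])
  finally show ?thesis .
qed

lemma lefschetz_nonzero_imp_invariant_simplex:
  assumes "finite X" and "digitally_continuous X adj f" and "lefschetz X adj f \<noteq> 0"
  shows "\<exists>q s. s \<in> simplices X adj q \<and> f ` s = s"
proof (rule ccontr)
  assume "\<not> ?thesis"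
  then have no_invariant: "{s \<in> simplices X adj q. f ` s = s} = {}" for q
    by blast
  have "lefschetz X adj f = 0"
    unfolding hopf_trace_formula[OF assms(1,2)]
      chain_trace_eq_sum_invariant_simplices[OF assms(1,2)] no_invariant
    by simp
  with assms(3) show False
    by simp
qed

lemma invariant_simplex_approx_fixed_point:
  assumes "s \<in> simplices X adj q" and "f ` s = s" and "x \<in> s"
  shows "approx_fixed_point adj f x"
  using assms by (auto simp: approx_fixed_point_def adj_eq_def simplices_def)

theorem corollary3p4:
  fixes X :: "'a::linorder set" and adj :: "'a \<Rightarrow> 'a \<Rightarrow> bool" and f :: "'a \<Rightarrow> 'a"
  assumes "finite X" and "digital_image X adj" and "digitally_continuous X adj f"
    and "lefschetz X adj f \<noteq> 0"
  shows "(\<exists>x\<in>X. f x = x) \<or>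
         (\<exists>x\<in>X. \<exists>y\<in>X. x \<noteq> y \<and> approx_fixed_point adj f x \<and> approx_fixed_point adj f y)"
proof -
  obtain q s where s: "s \<in> simplices X adj q" and invariant: "f ` s = s"
    using lefschetz_nonzero_imp_invariant_simplex assms(1,3,4) by blast
  have "finite s" and card: "card s = Suc q" and "s \<subseteq> X"
    using simplicesD[OF s] by auto
  show ?thesis
  proof (cases q)
    case 0
    with card have "card s = 1"
      by simp
    then obtain x where "s = {x}"
      by (rule card_1_singletonE)
    then show ?thesis
      using invariant \<open>s \<subseteq> X\<close> by auto
  next
    case (Suc p)
    with card have "\<not> card s \<le> Suc 0"
      by simp
    then obtain x y where "x \<in> s" "y \<in> s" "x \<noteq> y"
      using card_le_Suc0_iff_eq[OF \<open>finite s\<close>] by blast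
    then show ?thesis
      using invariant_simplex_approx_fixed_point[OF s invariant] \<open>s \<subseteq> X\<close> by blast
  qed
qed

end
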